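(* Let $G\le\mathrm{Homeo}_+(\mathbb{R})$ be finitely generated. Then every point of $\mathrm{crs}\,G$ lies in $J_1\cup J_2$ for some two-chain $\{J_1,J_2\}$ with $J_1,J_2\in\bigcup_{g\in G}\pi_0\operatorname{supp} g$. In particular, if $U\subseteq\mathbb{R}$ is a $G$-invariant set such that the restricted action $G|_U$ is Conradian, then $U\cap \mathrm{crs}\,G=\varnothing$.
   Context: For $g\in\mathrm{Homeo}_+(\mathbb{R})$, $\operatorname{supp} g=\mathbb{R}\setminus\mathrm{Fix}(g)$, $\operatorname{supp}G=\bigcup_{g\in G}\operatorname{supp} g$, and $\pi_0 X$ denotes the set of connected components of $X$. The crossed support $\mathrm{crs}\,G$ is the union of those components $J\in\pi_0\operatorname{supp} G$ which are not a connected component of $\operatorname{supp} g$ for any $g\in G$. A pair of open intervals $\{J_1,J_2\}$ is a two-chain if $J_1\cap J_2$ is a proper nonempty subinterval of both. For a group acting by order-preserving bijections on an ordered set $\Omega$, $f,g$ are crossed if there exist $u<w<v$ in $\Omega$ with $g^n(u)<w<f^n(v)$ for all $n\in\mathbb{Z}$ and $g^N(v)<w<f^N(u)$ for some $N\in\mathbb{Z}$; the action is Conradian if no two elements are crossed. *)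

theory Defs
  imports "HOL-Analysis.Analysis"
begin

definition homeo_plus :: "(real \<Rightarrow> real) \<Rightarrow> bool" where
  "homeo_plus f \<longleftrightarrow> continuous_on UNIV f \<and> bij f \<and> strict_mono f"

definition homeo_subgroup :: "(real \<Rightarrow> real) set \<Rightarrow> bool" where
  "homeo_subgroup G \<longleftrightarrow> (\<forall>g\<in>G. homeo_plus g) \<and> id \<in> G \<and>
     (\<forall>f\<in>G. \<forall>g\<in>G. f \<circ> g \<in> G) \<and> (\<forall>g\<in>G. inv g \<in> G)"

inductive_set gen_group :: "(real \<Rightarrow> real) set \<Rightarrow> (real \<Rightarrow> real) set"
  for S :: "(real \<Rightarrow> real) set" where
  gen_id: "id \<in> gen_group S"
| gen_gen: "s \<in> S \<Longrightarrow> s \<in> gen_group S"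
| gen_inv: "s \<in> S \<Longrightarrow> inv s \<in> gen_group S"
| gen_comp: "f \<in> gen_group S \<Longrightarrow> g \<in> gen_group S \<Longrightarrow> f \<circ> g \<in> gen_group S"

definition fin_gen :: "(real \<Rightarrow> real) set \<Rightarrow> bool" where
  "fin_gen G \<longleftrightarrow> (\<exists>S. finite S \<and> S \<subseteq> G \<and> G = gen_group S)"

definition supp :: "(real \<Rightarrow> real) \<Rightarrow> real set" where
  "supp g = {x. g x \<noteq> x}"

definition supp_grp :: "(real \<Rightarrow> real) set \<Rightarrow> real set" where
  "supp_grp G = (\<Union>g\<in>G. supp g)"

definition crs :: "(real \<Rightarrow> real) set \<Rightarrow> real set" where
  "crs G = \<Union>{J \<in> components (supp_grp G). \<forall>g\<in>G. J \<notin> components (supp g)}"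

definition open_interval :: "real set \<Rightarrow> bool" where
  "open_interval J \<longleftrightarrow> open J \<and> is_interval J \<and> J \<noteq> {}"

definition two_chain :: "real set \<Rightarrow> real set \<Rightarrow> bool" where
  "two_chain J1 J2 \<longleftrightarrow> open_interval J1 \<and> open_interval J2 \<and>
     J1 \<inter> J2 \<noteq> {} \<and> J1 \<inter> J2 \<subset> J1 \<and> J1 \<inter> J2 \<subset> J2"

definition zpow :: "(real \<Rightarrow> real) \<Rightarrow> int \<Rightarrow> real \<Rightarrow> real" where
  "zpow g n = (if 0 \<le> n then g ^^ nat n else (inv g) ^^ nat (- n))"

definition crossed_on :: "real set \<Rightarrow> (real \<Rightarrow> real) \<Rightarrow> (real \<Rightarrow> real) \<Rightarrow> bool" where
  "crossed_on U f g \<longleftrightarrow> (\<exists>u\<in>U. \<exists>w\<in>U. \<exists>v\<in>U. u < w \<and> w < v \<and>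
      (\<forall>n::int. zpow g n u < w \<and> w < zpow f n v) \<and>
      (\<exists>N::int. zpow g N v < w \<and> w < zpow f N u))"

definition conradian_on :: "(real \<Rightarrow> real) set \<Rightarrow> real set \<Rightarrow> bool" where
  "conradian_on G U \<longleftrightarrow> (\<forall>f\<in>G. \<forall>g\<in>G. \<not> crossed_on U f g)"

definition invariant_set :: "(real \<Rightarrow> real) set \<Rightarrow> real set \<Rightarrow> bool" where
  "invariant_set G U \<longleftrightarrow> (\<forall>g\<in>G. g ` U = U)"

end

theory Submission
  imports Defs
begin

text \<open>
  Let \<open>x \<in> crs G\<close> and let \<open>J\<close> be the component of \<open>supp G\<close> containing it. Since \<open>supp G\<close> is
  the union of the supports of finitely many generators, there is a maximal component \<open>I\<^sub>0\<close> of a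
  generator support containing \<open>x\<close>. It is a proper open subinterval of \<open>J\<close>, so \<open>J\<close> contains a
  boundary point of \<open>I\<^sub>0\<close>; the component \<open>I\<^sub>1\<close> of a generator support through that point overlaps
  \<open>I\<^sub>0\<close> and, by maximality, does not contain it, so \<open>{I\<^sub>0, I\<^sub>1}\<close> is a two-chain.

  For the second claim, let \<open>J\<^sub>1\<close> lie to the left of \<open>J\<^sub>2\<close>, with \<open>f\<close> moving points of \<open>J\<^sub>1\<close> up
  and \<open>g\<close> moving points of \<open>J\<^sub>2\<close> down (replacing an element by its inverse if necessary). A
  component of a support has no fixed points, so orbits in it leave every compact
  subinterval. Hence some \<open>w \<in> U\<close> lies in \<open>J\<^sub>1 \<inter> J\<^sub>2\<close>, and negative powers of \<open>f\<close> and \<open>g\<close> move \<open>w\<close>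
  to \<open>u \<in> J\<^sub>1 - J\<^sub>2\<close> and \<open>v \<in> J\<^sub>2 - J\<^sub>1\<close>. All powers of \<open>g\<close> preserve \<open>J\<^sub>2\<close> and its complement,
  and all powers of \<open>f\<close> preserve \<open>J\<^sub>1\<close> and its complement, so \<open>u < w < v\<close> witnesses that
  \<open>f\<close> and \<open>g\<close> are crossed on \<open>U\<close>.
\<close>

lemma supp_inv: "bij g \<Longrightarrow> supp (inv g) = supp g"
  unfolding supp_def by (metis bij_inv_eq_iff)

lemma supp_gen_group_subset:
  assumes "\<forall>s\<in>S. bij s" and "g \<in> gen_group S"
  shows "supp g \<subseteq> (\<Union>s\<in>S. supp s)"
  using assms(2)
proof induction
  case gen_id
  then show ?case by (simp add: supp_def)
next
  case (gen_inv s)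
  then show ?case using assms(1) supp_inv by auto
next
  case (gen_comp f g)
  have "supp (f \<circ> g) \<subseteq> supp f \<union> supp g" by (auto simp: supp_def)
  then show ?case using gen_comp.IH by blast
qed auto

lemma supp_grp_gen_group: "\<forall>s\<in>S. bij s \<Longrightarrow> supp_grp (gen_group S) = (\<Union>s\<in>S. supp s)"
  unfolding supp_grp_def using supp_gen_group_subset gen_group.gen_gen by blast

lemma open_supp: "continuous_on UNIV g \<Longrightarrow> open (supp g)"
  unfolding supp_def by (intro open_Collect_neq) (auto intro: continuous_intros)

lemma is_interval_component: "I \<in> components A \<Longrightarrow> is_interval (I :: real set)"
  using in_components_connected is_interval_connected_1 by blast

lemma open_interval_component: "open A \<Longrightarrow> I \<in> components A \<Longrightarrow> open_interval (I :: real set)"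
  unfolding open_interval_def using open_components is_interval_component in_components_nonempty
  by blast

text \<open>A fixed point of a strictly increasing map separates each point from its image, so the
  segment between them lies in the support.\<close>
lemma strict_mono_component_supp_closed:
  fixes h :: "real \<Rightarrow> real"
  assumes h: "strict_mono h" and J: "J \<in> components (supp h)" and y: "y \<in> J"
  shows "h y \<in> J"
proof -
  let ?S = "{min y (h y) .. max y (h y)}"
  have moved: "h y \<noteq> y" using y in_components_subset[OF J] by (auto simp: supp_def)
  have "?S \<subseteq> supp h"
  proof
    fix z assume z: "z \<in> ?S"
    show "z \<in> supp h"
    proof (rule ccontr)
      assume "z \<notin> supp h"
      then have "h z = z" by (simp add: supp_def)
      moreover have "y < z \<Longrightarrow> h y < z" "z < y \<Longrightarrow> z < h y"
        using strict_mono_less[OF h] \<open>h z = z\<close> by metis+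
      ultimately show False using z moved
        by (cases y z rule: linorder_cases) (simp_all add: min_def max_def split: if_splits)
    qed
  qed
  moreover have "J \<inter> ?S \<noteq> {}" using y by auto
  ultimately have "?S \<subseteq> J"
    using components_maximal[OF J connected_Icc] by blast
  then show ?thesis by auto
qed

lemma strict_mono_inv_bij: "strict_mono h \<Longrightarrow> bij h \<Longrightarrow> strict_mono (inv h)"
  for h :: "'a::linorder \<Rightarrow> 'b::linorder"
  by (rule strict_mono_inv[of h]) (simp_all add: bij_is_surj bij_is_inj)

lemma image_component_supp:
  fixes h :: "real \<Rightarrow> real"
  assumes h: "strict_mono h" "bij h" and J: "J \<in> components (supp h)"
  shows "h ` J = J"
proof -
  have J_inv: "J \<in> components (supp (inv h))" using J supp_inv[OF h(2)] by simp
  have inv_into: "inv h ` J \<subseteq> J"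
    using strict_mono_component_supp_closed[OF strict_mono_inv_bij[OF h] J_inv] by blast
  have "J \<subseteq> h ` J"
  proof
    fix z assume "z \<in> J"
    then have "inv h z \<in> J" using inv_into by blast
    moreover have "h (inv h z) = z" using h(2) by (simp add: bij_is_surj surj_f_inv_f)
    ultimately show "z \<in> h ` J" by (metis image_eqI)
  qed
  moreover have "h ` J \<subseteq> J" using strict_mono_component_supp_closed[OF h(1) J] by blast
  ultimately show ?thesis by blast
qed

lemma zpow_of_nat [simp]: "zpow h (int n) = h ^^ n"
  by (simp add: zpow_def)

lemma zpow_neg_of_nat: "zpow h (- int n) = inv h ^^ n"
  unfolding zpow_def by (cases "n = 0") auto

lemma zpow_cancel: "bij h \<Longrightarrow> zpow h (int n) (zpow h (- int n) x) = x"
  using fn_o_inv_fn_is_id[of h n] by (simp add: zpow_neg_of_nat fun_eq_iff)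

lemma funpow_mem_iff:
  assumes "inj h" and "h ` A = A"
  shows "(h ^^ n) x \<in> A \<longleftrightarrow> x \<in> A"
proof -
  have "h y \<in> A \<longleftrightarrow> y \<in> A" for y
    using inj_image_mem_iff[OF assms(1), of y A] assms(2) by simp
  then show ?thesis by (induction n) auto
qed

lemma strict_mono_funpow: "strict_mono h \<Longrightarrow> strict_mono (h ^^ n)"
  for h :: "'a::order \<Rightarrow> 'a"
  by (induction n) (auto simp: strict_mono_def)

lemma zpow_mem_iff:
  assumes "bij h" and "h ` A = A"
  shows "zpow h n x \<in> A \<longleftrightarrow> x \<in> A"
proof -
  have "inv h ` A = A" using assms by (metis bij_is_inj image_inv_f_f)
  then show ?thesis
    using assms funpow_mem_iff[of h A] funpow_mem_iff[of "inv h" A]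
    by (simp add: zpow_def bij_is_inj bij_imp_bij_inv)
qed

lemma strict_mono_zpow:
  assumes "strict_mono h" and "bij h"
  shows "strict_mono (zpow h n)"
  using assms strict_mono_inv_bij[OF assms] by (simp add: zpow_def strict_mono_funpow)

lemma component_supp_direction:
  fixes h :: "real \<Rightarrow> real"
  assumes h: "continuous_on UNIV h" and J: "J \<in> components (supp h)"
  shows "(\<forall>z\<in>J. z < h z) \<or> (\<forall>z\<in>J. h z < z)"
proof (rule ccontr)
  assume "\<not> ?thesis"
  then obtain a b where ab: "a \<in> J" "b \<in> J" "h a \<le> a" "b \<le> h b" by (auto simp: not_less)
  have moved: "h z \<noteq> z" if "z \<in> J" for z
    using that in_components_subset[OF J] by (auto simp: supp_def)
  have "continuous_on J (\<lambda>z. h z - z)"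
    by (intro continuous_intros continuous_on_subset[OF h]) simp
  then have "is_interval ((\<lambda>z. h z - z) ` J)"
    using connected_continuous_image in_components_connected[OF J] is_interval_connected_1 by blast
  moreover have "h a - a < 0" "0 < h b - b" using ab moved by force+
  ultimately have "0 \<in> (\<lambda>z. h z - z) ` J"
    using ab(1,2) unfolding is_interval_1 by (meson imageI less_imp_le)
  then show False using moved by auto
qed

lemma homeo_plus_component_supp_directions:
  assumes h: "homeo_plus h" and J: "J \<in> components (supp h)"
  obtains "\<forall>z\<in>J. z < h z" "\<forall>z\<in>J. inv h z < z"
    | "\<forall>z\<in>J. h z < z" "\<forall>z\<in>J. z < inv h z"
proof -
  have bij: "bij h" and "strict_mono h" and cont: "continuous_on UNIV h"
    using h by (auto simp: homeo_plus_def)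
  then have "h ` J = J" using image_component_supp J by blast
  then have inv_in_J: "inv h z \<in> J" if "z \<in> J" for z
    using that bij by (metis bij_is_inj imageI image_inv_f_f)
  have h_inv: "h (inv h z) = z" for z using bij by (simp add: bij_is_surj surj_f_inv_f)
  consider "\<forall>z\<in>J. z < h z" | "\<forall>z\<in>J. h z < z" using component_supp_direction[OF cont J] by blast
  then show thesis
  proof cases
    case 1
    then have "\<forall>z\<in>J. inv h z < z" using inv_in_J h_inv by metis
    with 1 that(1) show thesis by blast
  next
    case 2
    then have "\<forall>z\<in>J. z < inv h z" using inv_in_J h_inv by metis
    with 2 that(2) show thesis by blast
  qed
qed

lemma bounded_monotone_orbit_fixpoint:
  fixes h :: "real \<Rightarrow> real"
  assumes h: "continuous_on UNIV h" and mono: "monoseq (\<lambda>n. (h ^^ n) y)"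
    and bounded: "\<forall>n. (h ^^ n) y \<in> {a..b}"
  obtains L where "L \<in> {a..b}" "h L = L"
proof -
  let ?s = "\<lambda>n. (h ^^ n) y"
  have "range ?s \<subseteq> {a..b}" using bounded by auto
  then have "Bseq ?s" by (rule Limits.Bseq_eq_bounded)
  then obtain L where lim: "?s \<longlonglongrightarrow> L"
    using Bseq_monoseq_convergent[OF _ mono] by (auto simp: convergent_def)
  have "L \<in> {a..b}" using closed_sequentially[OF closed_atLeastAtMost _ lim] bounded by blast
  moreover have "(\<lambda>n. h (?s n)) \<longlonglongrightarrow> h L"
    using continuous_on_tendsto_compose[OF h lim] by simp
  then have "(\<lambda>n. ?s (Suc n)) \<longlonglongrightarrow> h L" by simp
  then have "h L = L" using LIMSEQ_Suc[OF lim] LIMSEQ_unique by blast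
  ultimately show thesis using that by blast
qed

lemma funpow_eventually_above:
  fixes h :: "real \<Rightarrow> real"
  assumes h: "continuous_on UNIV h" and J: "is_interval J" "h ` J \<subseteq> J"
    and up: "\<forall>z\<in>J. z < h z" and y: "y \<in> J" and t: "t \<in> J"
  shows "\<forall>\<^sub>F n in sequentially. t < (h ^^ n) y"
proof -
  have orbit: "(h ^^ n) y \<in> J" for n by (induction n) (use J(2) y in auto)
  then have inc: "incseq (\<lambda>n. (h ^^ n) y)" using up by (intro incseq_SucI) (simp add: less_imp_le)
  obtain n where n: "t < (h ^^ n) y"
  proof (rule ccontr)
    assume no: "\<not> thesis"
    have "(h ^^ n) y \<le> t" for n using that[of n] no by linarith
    then have "\<forall>n. (h ^^ n) y \<in> {y..t}" using incseqD[OF inc, of 0] by auto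
    then obtain L where "L \<in> {y..t}" "h L = L"
      by (rule bounded_monotone_orbit_fixpoint[OF h incseq_imp_monoseq[OF inc]])
    moreover have "L \<in> J" using \<open>L \<in> {y..t}\<close> mem_is_interval_1_I[OF J(1) y t] by simp
    ultimately show False using up by (metis less_irrefl)
  qed
  show ?thesis
  proof (rule eventually_sequentiallyI)
    fix m assume "n \<le> m"
    then show "t < (h ^^ m) y" using n incseqD[OF inc] by (meson less_le_trans)
  qed
qed

lemma funpow_eventually_below:
  fixes h :: "real \<Rightarrow> real"
  assumes h: "continuous_on UNIV h" and J: "is_interval J" "h ` J \<subseteq> J"
    and down: "\<forall>z\<in>J. h z < z" and y: "y \<in> J" and t: "t \<in> J"
  shows "\<forall>\<^sub>F n in sequentially. (h ^^ n) y < t"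
proof -
  have orbit: "(h ^^ n) y \<in> J" for n by (induction n) (use J(2) y in auto)
  then have dec: "decseq (\<lambda>n. (h ^^ n) y)" using down by (intro decseq_SucI) (simp add: less_imp_le)
  obtain n where n: "(h ^^ n) y < t"
  proof (rule ccontr)
    assume no: "\<not> thesis"
    have "t \<le> (h ^^ n) y" for n using that[of n] no by linarith
    then have "\<forall>n. (h ^^ n) y \<in> {t..y}" using decseqD[OF dec, of 0] by auto
    then obtain L where "L \<in> {t..y}" "h L = L"
      by (rule bounded_monotone_orbit_fixpoint[OF h decseq_imp_monoseq[OF dec]])
    moreover have "L \<in> J" using \<open>L \<in> {t..y}\<close> mem_is_interval_1_I[OF J(1) t y] by simp
    ultimately show False using down by (metis less_irrefl)
  qed
  show ?thesis
  proof (rule eventually_sequentiallyI)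
    fix m assume "n \<le> m"
    then show "(h ^^ m) y < t" using n decseqD[OF dec] by (meson le_less_trans)
  qed
qed

lemma is_interval_outside_less:
  fixes J :: "real set"
  shows "is_interval J \<Longrightarrow> a \<notin> J \<Longrightarrow> b \<in> J \<Longrightarrow> c \<in> J \<Longrightarrow> a < b \<Longrightarrow> a < c"
  by (meson mem_is_interval_1_I not_less less_imp_le)

lemma is_interval_outside_greater:
  fixes J :: "real set"
  shows "is_interval J \<Longrightarrow> a \<notin> J \<Longrightarrow> b \<in> J \<Longrightarrow> c \<in> J \<Longrightarrow> b < a \<Longrightarrow> c < a"
  by (meson mem_is_interval_1_I not_less less_imp_le)

lemma two_chain_ordered_points:
  fixes A B :: "real set"
  assumes "two_chain A B"
  obtains p q r where "p \<in> A - B" "q \<in> A \<inter> B" "r \<in> B - A" "p < q" "q < r"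
    | p q r where "p \<in> B - A" "q \<in> A \<inter> B" "r \<in> A - B" "p < q" "q < r"
proof -
  obtain q a b where q: "q \<in> A \<inter> B" and a: "a \<in> A - B" and b: "b \<in> B - A"
    using assms unfolding two_chain_def by blast
  have iv: "is_interval A" "is_interval B"
    using assms by (auto simp: two_chain_def open_interval_def)
  show thesis
  proof (cases "a < q")
    case True
    then have "q < b"
      using is_interval_outside_less[OF iv(2), of a q b] is_interval_outside_less[OF iv(1), of b q a]
        a b q by (metis DiffD1 DiffD2 IntD1 IntD2 linorder_neqE_linordered_idom less_imp_not_less)
    with True show thesis using that(1) a b q by blast
  next
    case False
    then have "q < a" using a q by (metis DiffD2 IntD2 linorder_neqE_linordered_idom)
    then have "b < q"
      using is_interval_outside_greater[OF iv(2), of a q b] is_interval_outside_greater[OF iv(1), of b q a]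
        a b q by (metis DiffD1 DiffD2 IntD1 IntD2 linorder_neqE_linordered_idom less_imp_not_less)
    with \<open>q < a\<close> show thesis using that(2) a b q by blast
  qed
qed

lemma invariant_component_point_below:
  fixes h :: "real \<Rightarrow> real"
  assumes h: "homeo_plus h" "h ` U = U" "J \<in> components (supp h)" and w: "w \<in> U \<inter> J"
    and p: "p \<in> J"
  obtains u where "u \<in> U \<inter> J" "u < p"
proof -
  have cont: "continuous_on UNIV h" and bij: "bij h" and mono: "strict_mono h"
    using h(1) by (auto simp: homeo_plus_def)
  have iv: "is_interval J" using is_interval_component h(3) .
  have inv: "h ` J = J" using image_component_supp mono bij h(3) by blast
  then have orbit: "zpow h n w \<in> U \<inter> J" for n using zpow_mem_iff[OF bij] h(2) w by blast
  from component_supp_direction[OF cont h(3)] show thesis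
  proof
    assume up: "\<forall>z\<in>J. z < h z"
    have "\<forall>\<^sub>F n in sequentially. w < (h ^^ n) p"
      using funpow_eventually_above[OF cont iv _ up p] inv w by simp
    then obtain n where "w < (h ^^ n) p" using eventually_happens'[OF sequentially_bot] by blast
    then have "(h ^^ n) (zpow h (- int n) w) < (h ^^ n) p" using zpow_cancel[OF bij] by simp
    then have "zpow h (- int n) w < p" using strict_mono_less[OF strict_mono_funpow[OF mono]] by blast
    then show thesis using that orbit by blast
  next
    assume down: "\<forall>z\<in>J. h z < z"
    have "\<forall>\<^sub>F n in sequentially. (h ^^ n) w < p"
      using funpow_eventually_below[OF cont iv _ down _ p] inv w by simp
    then obtain n where "(h ^^ n) w < p" using eventually_happens'[OF sequentially_bot] by blast
    then show thesis using that orbit[of "int n"] by simp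
  qed
qed

lemma invariant_component_point_above:
  fixes h :: "real \<Rightarrow> real"
  assumes h: "homeo_plus h" "h ` U = U" "J \<in> components (supp h)" and w: "w \<in> U \<inter> J"
    and p: "p \<in> J"
  obtains v where "v \<in> U \<inter> J" "p < v"
proof -
  have cont: "continuous_on UNIV h" and bij: "bij h" and mono: "strict_mono h"
    using h(1) by (auto simp: homeo_plus_def)
  have iv: "is_interval J" using is_interval_component h(3) .
  have inv: "h ` J = J" using image_component_supp mono bij h(3) by blast
  then have orbit: "zpow h n w \<in> U \<inter> J" for n using zpow_mem_iff[OF bij] h(2) w by blast
  from component_supp_direction[OF cont h(3)] show thesis
  proof
    assume up: "\<forall>z\<in>J. z < h z"
    have "\<forall>\<^sub>F n in sequentially. p < (h ^^ n) w"
      using funpow_eventually_above[OF cont iv _ up _ p] inv w by simp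
    then obtain n where "p < (h ^^ n) w" using eventually_happens'[OF sequentially_bot] by blast
    then show thesis using that orbit[of "int n"] by simp
  next
    assume down: "\<forall>z\<in>J. h z < z"
    have "\<forall>\<^sub>F n in sequentially. (h ^^ n) p < w"
      using funpow_eventually_below[OF cont iv _ down p] inv w by simp
    then obtain n where "(h ^^ n) p < w" using eventually_happens'[OF sequentially_bot] by blast
    then have "(h ^^ n) p < (h ^^ n) (zpow h (- int n) w)" using zpow_cancel[OF bij] by simp
    then have "p < zpow h (- int n) w" using strict_mono_less[OF strict_mono_funpow[OF mono]] by blast
    then show thesis using that orbit by blast
  qed
qed

text \<open>The orbit of a point of \<open>U \<inter> A\<close> has points on both sides of a point of \<open>A \<inter> B\<close>, and
  one side of \<open>A\<close> lies in \<open>B\<close>.\<close>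
lemma two_chain_overlap_meets_invariant:
  assumes "homeo_plus a" "a ` U = U" "A \<in> components (supp a)"
    and chain: "two_chain A B" and x: "x \<in> U \<inter> A"
  obtains w where "w \<in> U \<inter> A \<inter> B"
proof -
  obtain q r where q: "q \<in> A \<inter> B" and r: "r \<in> B - A"
    using chain unfolding two_chain_def by blast
  have iv: "is_interval A" "is_interval B"
    using chain by (auto simp: two_chain_def open_interval_def)
  obtain lo where lo: "lo \<in> U \<inter> A" "lo < q"
    using invariant_component_point_below assms x q by blast
  obtain hi where hi: "hi \<in> U \<inter> A" "q < hi"
    using invariant_component_point_above assms x q by blast
  have "lo \<in> B \<or> hi \<in> B"
  proof (rule ccontr)
    assume "\<not> (lo \<in> B \<or> hi \<in> B)"
    then have "lo < r" "r < hi"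
      using is_interval_outside_less[OF iv(2), of lo q r] is_interval_outside_greater[OF iv(2), of hi q r]
        lo hi q r by auto
    then show False using mem_is_interval_1_I[OF iv(1), of lo hi r] lo hi r by auto
  qed
  then show thesis using that lo hi by blast
qed

lemma two_chain_crossed_on:
  fixes f g :: "real \<Rightarrow> real"
  assumes f: "homeo_plus f" "f ` U = U" "J1 \<in> components (supp f)" "\<forall>z\<in>J1. z < f z"
    and g: "homeo_plus g" "g ` U = U" "J2 \<in> components (supp g)" "\<forall>z\<in>J2. g z < z"
    and p1: "p1 \<in> J1 - J2" and q: "q \<in> J1 \<inter> J2" and p2: "p2 \<in> J2 - J1"
    and order: "p1 < q" "q < p2" and w: "w \<in> U \<inter> J1 \<inter> J2"
  shows "crossed_on U f g"
proof -
  have cont: "continuous_on UNIV f" "continuous_on UNIV g"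
    and bij: "bij f" "bij g" and mono: "strict_mono f" "strict_mono g"
    using f(1) g(1) by (auto simp: homeo_plus_def)
  have iv: "is_interval J1" "is_interval J2" using is_interval_component f(3) g(3) by blast+
  have inv: "f ` J1 = J1" "g ` J2 = J2" using image_component_supp mono bij f(3) g(3) by blast+
  obtain u where u: "u \<in> U \<inter> J1" "u < p1"
    using invariant_component_point_below[OF f(1-3)] w p1 by blast
  then have "u \<notin> J2" using mem_is_interval_1_I[OF iv(2), of u q p1] p1 q order by auto
  obtain v where v: "v \<in> U \<inter> J2" "p2 < v"
    using invariant_component_point_above[OF g(1-3)] w p2 by blast
  then have "v \<notin> J1" using mem_is_interval_1_I[OF iv(1), of q v p2] p2 q order by auto
  have g_below: "zpow g i u < w" for i
  proof -
    have "zpow g i u < zpow g i q"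
      using strict_mono_zpow[OF mono(2) bij(2)] u order by (meson less_trans strict_mono_less)
    then show ?thesis
      using is_interval_outside_less[OF iv(2)] zpow_mem_iff[OF bij(2)] inv \<open>u \<notin> J2\<close> q w by blast
  qed
  have f_above: "w < zpow f i v" for i
  proof -
    have "zpow f i q < zpow f i v"
      using strict_mono_zpow[OF mono(1) bij(1)] v order by (meson less_trans strict_mono_less)
    then show ?thesis
      using is_interval_outside_greater[OF iv(1)] zpow_mem_iff[OF bij(1)] inv \<open>v \<notin> J1\<close> q w by blast
  qed
  have "\<forall>\<^sub>F N in sequentially. w < (f ^^ N) u \<and> (g ^^ N) v < w"
    using funpow_eventually_above[OF cont(1) iv(1) _ f(4), of u w]
      funpow_eventually_below[OF cont(2) iv(2) _ g(4), of v w] inv u v w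
    by (auto intro: eventually_conj)
  then obtain N where "w < zpow f (int N) u" "zpow g (int N) v < w"
    using eventually_happens'[OF sequentially_bot] by auto
  moreover have "u < w" "w < v" using g_below[of 0] f_above[of 0] by (simp_all add: zpow_def)
  ultimately show ?thesis
    unfolding crossed_on_def using u v w g_below f_above by blast
qed

lemma two_chain_not_conradian:
  assumes G: "homeo_subgroup G" and U: "invariant_set G U"
    and f: "f \<in> G" "J1 \<in> components (supp f)" and g: "g \<in> G" "J2 \<in> components (supp g)"
    and chain: "two_chain J1 J2" and x: "x \<in> U \<inter> (J1 \<union> J2)"
  shows "\<not> conradian_on G U"
proof -
  have homeo: "homeo_plus h" "h ` U = U" if "h \<in> G" for h
    using G U that by (auto simp: homeo_subgroup_def invariant_set_def)
  have member_or_inverse: "h' \<in> G" "supp h' = supp h" if "h \<in> G" "h' \<in> {h, inv h}" for h h'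
    using G that supp_inv by (auto simp: homeo_subgroup_def homeo_plus_def)
  have "two_chain J2 J1" using chain by (auto simp: two_chain_def)
  then obtain w where w: "w \<in> U \<inter> J1 \<inter> J2"
    using two_chain_overlap_meets_invariant[OF homeo[OF f(1)] f(2) chain]
      two_chain_overlap_meets_invariant[OF homeo[OF g(1)] g(2)] x by blast
  have crossed: "\<not> conradian_on G U"
    if a: "a \<in> G" "A \<in> components (supp a)" and b: "b \<in> G" "B \<in> components (supp b)"
      and pqr: "p \<in> A - B" "q \<in> A \<inter> B" "r \<in> B - A" "p < q" "q < r"
      and w: "w \<in> U \<inter> A \<inter> B" for a b A B p q r
  proof -
    have "\<exists>up\<in>{a, inv a}. \<forall>z\<in>A. z < up z"
      by (rule homeo_plus_component_supp_directions[OF homeo(1)[OF a(1)] a(2)]) auto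
    then obtain up where up: "up \<in> {a, inv a}" "\<forall>z\<in>A. z < up z" ..
    have "\<exists>down\<in>{b, inv b}. \<forall>z\<in>B. down z < z"
      by (rule homeo_plus_component_supp_directions[OF homeo(1)[OF b(1)] b(2)]) auto
    then obtain down where down: "down \<in> {b, inv b}" "\<forall>z\<in>B. down z < z" ..
    note up_props = member_or_inverse[OF a(1) up(1)]
      and down_props = member_or_inverse[OF b(1) down(1)]
    have "crossed_on U up down"
      using two_chain_crossed_on[OF homeo[OF up_props(1)] a(2)[folded up_props(2)] up(2)
          homeo[OF down_props(1)] b(2)[folded down_props(2)] down(2) pqr w] .
    then show ?thesis using up_props(1) down_props(1) by (auto simp: conradian_on_def)
  qed
  from chain show ?thesis
  proof (cases rule: two_chain_ordered_points)
    case 1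
    then show ?thesis by (rule crossed[OF f g _ _ _ _ _ w])
  next
    case 2
    moreover have "w \<in> U \<inter> J2 \<inter> J1" using w by blast
    ultimately show ?thesis by (intro crossed[OF g f]) blast+
  qed
qed

lemma finite_components_maximal:
  assumes "finite \<S>" and "x \<in> \<Union>\<S>"
  obtains A I where "A \<in> \<S>" "I \<in> components A" "x \<in> I"
    and "\<And>B I'. B \<in> \<S> \<Longrightarrow> I' \<in> components B \<Longrightarrow> I \<subseteq> I' \<Longrightarrow> I' = I"
proof -
  define M where "M = {I. \<exists>A\<in>\<S>. I \<in> components A \<and> x \<in> I}"
  have "M \<subseteq> (\<lambda>A. connected_component_set A x) ` \<S>"
  proof
    fix I assume "I \<in> M"
    then obtain A where "A \<in> \<S>" "I \<in> components A" "x \<in> I" unfolding M_def by blast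
    then have "I = connected_component_set A x" by (metis components_iff connected_component_eq)
    then show "I \<in> (\<lambda>A. connected_component_set A x) ` \<S>" using \<open>A \<in> \<S>\<close> by blast
  qed
  then have "finite M" using assms(1) finite_subset by blast
  moreover have "M \<noteq> {}" unfolding M_def using assms(2) componentsI by fastforce
  ultimately obtain I where "I \<in> M" and maximal: "\<forall>I'\<in>M. I \<subseteq> I' \<longrightarrow> I = I'"
    using finite_has_maximal by blast
  then obtain A where "A \<in> \<S>" "I \<in> components A" "x \<in> I" unfolding M_def by blast
  moreover have "I' = I" if "B \<in> \<S>" "I' \<in> components B" "I \<subseteq> I'" for B I'
    using maximal that \<open>x \<in> I\<close> unfolding M_def by blast
  ultimately show thesis using that by blast
qed

lemma components_Union_two_chain:
  fixes \<S> :: "real set set"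
  assumes fin: "finite \<S>" and opn: "\<forall>A\<in>\<S>. open A"
    and J: "J \<in> components (\<Union>\<S>)" "x \<in> J" and not_component: "\<forall>A\<in>\<S>. J \<notin> components A"
  obtains A B I0 I1 where "A \<in> \<S>" "B \<in> \<S>" "I0 \<in> components A" "I1 \<in> components B"
    "two_chain I0 I1" "x \<in> I0"
proof -
  obtain A I0 where A: "A \<in> \<S>" and I0: "I0 \<in> components A" "x \<in> I0"
    and maximal: "\<And>B I'. B \<in> \<S> \<Longrightarrow> I' \<in> components B \<Longrightarrow> I0 \<subseteq> I' \<Longrightarrow> I' = I0"
    using finite_components_maximal[OF fin] J in_components_subset by blast
  have "open I0" using open_components opn A I0(1) by blast
  have "I0 \<subseteq> J"
    using components_maximal[OF J(1) in_components_connected[OF I0(1)]]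
      in_components_subset[OF I0(1)] A I0(2) J(2) by blast
  moreover have "I0 \<noteq> J" using not_component A I0(1) by blast
  ultimately have "J \<inter> frontier I0 \<noteq> {}"
    using connected_Int_frontier[OF in_components_connected[OF J(1)]] I0(2) J(2) by blast
  then obtain b where b: "b \<in> J" "b \<in> closure I0" "b \<notin> I0"
    using interior_open[OF \<open>open I0\<close>] by (auto simp: frontier_def)
  then obtain B where B: "B \<in> \<S>" "b \<in> B" using J(1) in_components_subset by blast
  define I1 where "I1 = connected_component_set B b"
  have I1: "I1 \<in> components B" "b \<in> I1" using B componentsI by (auto simp: I1_def)
  have "open I1" using open_components opn B(1) I1(1) by blast
  then have "I0 \<inter> I1 \<noteq> {}" using b I1(2) open_Int_closure_eq_empty by blast
  moreover have "\<not> I0 \<subseteq> I1" using maximal[OF B(1) I1(1)] I1(2) b(3) by blast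
  ultimately have "two_chain I0 I1"
    using open_interval_component opn A B(1) I0(1) I1 b(3) unfolding two_chain_def by blast
  then show thesis using that A B(1) I0 I1(1) by blast
qed

lemma crs_covered_by_two_chain:
  assumes G: "homeo_subgroup G" and "fin_gen G" and x: "x \<in> crs G"
  shows "\<exists>J1 J2. J1 \<in> (\<Union>g\<in>G. components (supp g)) \<and> J2 \<in> (\<Union>g\<in>G. components (supp g)) \<and>
           two_chain J1 J2 \<and> x \<in> J1 \<union> J2"
proof -
  obtain S where S: "finite S" "S \<subseteq> G" "G = gen_group S"
    using assms(2) by (auto simp: fin_gen_def)
  have homeo: "homeo_plus s" if "s \<in> S" for s using G S(2) that by (auto simp: homeo_subgroup_def)
  then have supp_G: "supp_grp G = \<Union>(supp ` S)"
    using supp_grp_gen_group[of S] S(3) by (auto simp: homeo_plus_def)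
  then obtain J where J: "J \<in> components (\<Union>(supp ` S))" "x \<in> J"
    and not_component: "\<forall>g\<in>G. J \<notin> components (supp g)"
    using x unfolding crs_def supp_G by blast
  have "finite (supp ` S)" using S(1) by simp
  moreover have "\<forall>A\<in>supp ` S. open A" using homeo open_supp by (simp add: homeo_plus_def)
  moreover have "\<forall>A\<in>supp ` S. J \<notin> components A" using not_component S(2) by blast
  ultimately obtain A B I0 I1 where "A \<in> supp ` S" "B \<in> supp ` S"
    and I: "I0 \<in> components A" "I1 \<in> components B" "two_chain I0 I1" "x \<in> I0"
    by (rule components_Union_two_chain[OF _ _ J])
  then have "I0 \<in> (\<Union>g\<in>G. components (supp g))" "I1 \<in> (\<Union>g\<in>G. components (supp g))"
    using S(2) by auto
  then show ?thesis using I by blast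
qed

theorem lemma2p9:
  fixes G :: "(real \<Rightarrow> real) set"
  assumes "homeo_subgroup G" and "fin_gen G"
  shows "(\<forall>x\<in>crs G. \<exists>J1 J2. J1 \<in> (\<Union>g\<in>G. components (supp g)) \<and>
                            J2 \<in> (\<Union>g\<in>G. components (supp g)) \<and>
                            two_chain J1 J2 \<and> x \<in> J1 \<union> J2)
       \<and> (\<forall>U. invariant_set G U \<and> conradian_on G U \<longrightarrow> U \<inter> crs G = {})"
proof -
  have chains: "\<forall>x\<in>crs G. \<exists>J1 J2. J1 \<in> (\<Union>g\<in>G. components (supp g)) \<and>
                  J2 \<in> (\<Union>g\<in>G. components (supp g)) \<and> two_chain J1 J2 \<and> x \<in> J1 \<union> J2"
    using crs_covered_by_two_chain[OF assms] by blast
  moreover have "U \<inter> crs G = {}" if "invariant_set G U" "conradian_on G U" for U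
    using chains two_chain_not_conradian[OF assms(1) that(1)] that(2) by blast
  ultimately show ?thesis by blast
qed

end
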